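(* If a minimal tree $T$ of order $n\ge6$ has a branch with $5$ vertices, then this branch is contained in a branch of $T$ whose order is $10$, $11$, $15$ or $16$.
   Context: A rooted tree $T$ is a finite tree with a distinguished vertex, its root; its order $|T|$ is its number of vertices. For vertices $u,v$, the infimum of $u$ and $v$ is the vertex common to the path from $u$ to the root and the path from $v$ to the root that is furthest from the root. A set $X\subseteq V(T)$ is infima closed if the infimum of any two elements of $X$ lies in $X$. $I(T)$ denotes the number of nonempty infima closed subsets of $V(T)$. For $n\ge1$, $m_n=\min\{I(T): |T|=n\}$; a rooted tree $T$ with $I(T)=m_{|T|}$ is called minimal. A branch of $T$ is the subtree consisting of a vertex and all its descendants, rooted at that vertex. *)

theory Defs
  imports Main "HOL-Library.Sublist"
begin

text \<open>Rooted trees: a node with a (finite) list of children. The order of the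
children is irrelevant for all notions used below.\<close>
datatype rtree = Node "rtree list"

fun tsize :: "rtree \<Rightarrow> nat" where
  "tsize (Node ts) = Suc (sum_list (map tsize ts))"

text \<open>Vertices are addressed by positions (paths from the root); the root is [].
 u is an ancestor-or-equal of v iff u is a prefix of v.\<close>
fun is_pos :: "rtree \<Rightarrow> nat list \<Rightarrow> bool" where
  "is_pos t [] = True"
| "is_pos (Node ts) (i # p) = (i < length ts \<and> is_pos (ts ! i) p)"

definition positions :: "rtree \<Rightarrow> nat list set" where
  "positions T = {p. is_pos T p}"

fun branch_at :: "rtree \<Rightarrow> nat list \<Rightarrow> rtree" where
  "branch_at t [] = t"
| "branch_at (Node ts) (i # p) = branch_at (ts ! i) p"

definition vinf :: "nat list \<Rightarrow> nat list \<Rightarrow> nat list" where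
  "vinf u v = longest_common_prefix u v"

definition infima_closed :: "nat list set \<Rightarrow> bool" where
  "infima_closed X \<longleftrightarrow> (\<forall>u\<in>X. \<forall>v\<in>X. vinf u v \<in> X)"

definition I :: "rtree \<Rightarrow> nat" where
  "I T = card {X. X \<subseteq> positions T \<and> X \<noteq> {} \<and> infima_closed X}"

definition m :: "nat \<Rightarrow> nat" where
  "m n = Min {I T | T. tsize T = n}"

definition minimal :: "rtree \<Rightarrow> bool" where
  "minimal T \<longleftrightarrow> I T = m (tsize T)"

end

(* Counting by whether the root belongs to the set gives the recursion
   I (Node ts) = (SUM t in ts. I t) + (PROD t in ts. 1 + I t): an infima closed set avoiding the
   root lies in a single branch, one containing it is an arbitrary choice of (possibly empty)
   infima closed sets of the branches.  Hence branches of minimal trees are minimal, and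
   exchanging sub-forests among the children of a minimal tree never decreases I.  Such exchanges
   show that a minimal tree has at most four leaf children, and exactly two children as soon as two
   of them are not leaves.  Let P be the parent of a branch B of order 5 in a minimal tree; then
   I B = m_5 = 20.  If B were the only non-leaf child of P, the order of P would be at most 10 and
   an explicit tree of the same order would beat P.  Otherwise P = Node [B, C], and swapping B
   with a child of C shows that every child of C has I at most 20, hence order at most 5, so
   |C| <= 11.  With the lower bounds m_1, ..., m_11 (checked by enumerating partitions) all orders
   of C except 4, 5, 9, 10 are again beaten by explicit trees. *)

theory Submission
  imports Defs "HOL-Library.FuncSet" "HOL-Library.Multiset"
begin

section \<open>Counting infima closed sets\<close>

abbreviation leaf :: rtree where "leaf \<equiv> Node []"

definition inf_closed_sets :: "rtree \<Rightarrow> nat list set set" where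
  "inf_closed_sets t = {X. X \<subseteq> positions t \<and> X \<noteq> {} \<and> infima_closed X}"

lemma I_eq_card_inf_closed_sets: "I t = card (inf_closed_sets t)"
  by (simp add: I_def inf_closed_sets_def)

lemma vinf_simps [simp]:
  "vinf [] v = []" "vinf u [] = []"
  "vinf (i # u) (j # v) = (if i = j then i # vinf u v else [])"
  unfolding vinf_def by (simp, cases u, simp_all)

lemma positions_Node:
  "positions (Node ts) = insert [] (\<Union>i<length ts. Cons i ` positions (ts ! i))"
proof -
  have "is_pos (Node ts) p \<longleftrightarrow> p = [] \<or> (\<exists>i<length ts. p \<in> Cons i ` {q. is_pos (ts ! i) q})" for p
    by (cases p) auto
  then show ?thesis by (auto simp: positions_def)
qed

lemma finite_positions: "finite (positions t)"
  by (induction t) (auto simp: positions_Node)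

lemma is_pos_snoc:
  "is_pos T (w @ [i]) \<Longrightarrow>
    \<exists>ts. is_pos T w \<and> branch_at T w = Node ts \<and> i < length ts \<and> branch_at T (w @ [i]) = ts ! i"
proof (induction w arbitrary: T)
  case Nil
  then show ?case by (cases T) auto
next
  case (Cons j w)
  then show ?case by (cases T) auto
qed

lemma finite_inf_closed_sets: "finite (inf_closed_sets t)"
  using finite_positions by (auto simp: inf_closed_sets_def intro: finite_subset[of _ "Pow (positions t)"])

lemma infima_closed_image_Cons: "infima_closed (Cons i ` Y) \<longleftrightarrow> infima_closed Y"
  by (auto simp: infima_closed_def)

lemma infima_closed_slice: "infima_closed X \<Longrightarrow> infima_closed {p. i # p \<in> X}"
  unfolding infima_closed_def by (metis mem_Collect_eq vinf_simps(3))

lemma inf_closed_sets_Node_root_notin: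
  "{X \<in> inf_closed_sets (Node ts). [] \<notin> X} = (\<Union>i<length ts. image (Cons i) ` inf_closed_sets (ts ! i))"
proof (intro set_eqI iffI)
  fix X assume "X \<in> {X \<in> inf_closed_sets (Node ts). [] \<notin> X}"
  then have sub: "X \<subseteq> positions (Node ts)" and "X \<noteq> {}" and cl: "infima_closed X"
    and root: "[] \<notin> X" by (auto simp: inf_closed_sets_def)
  then obtain i p where ip: "i # p \<in> X" by (metis ex_in_conv neq_Nil_conv)
  \<comment> \<open>two elements starting with different indices would have the root as infimum\<close>
  have "\<exists>q. y = i # q" if "y \<in> X" for y
    using cl ip that root unfolding infima_closed_def
    by (metis neq_Nil_conv vinf_simps(3))
  then have X: "X = Cons i ` {q. i # q \<in> X}" by auto
  have "i < length ts" using sub ip by (auto simp: positions_def)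
  moreover have "{q. i # q \<in> X} \<in> inf_closed_sets (ts ! i)"
    using sub ip infima_closed_slice[OF cl] by (auto simp: inf_closed_sets_def positions_def)
  ultimately show "X \<in> (\<Union>i<length ts. image (Cons i) ` inf_closed_sets (ts ! i))"
    using X by blast
next
  fix X assume "X \<in> (\<Union>i<length ts. image (Cons i) ` inf_closed_sets (ts ! i))"
  then show "X \<in> {X \<in> inf_closed_sets (Node ts). [] \<notin> X}"
    by (auto simp: inf_closed_sets_def positions_def infima_closed_image_Cons)
qed

lemma card_inf_closed_sets_Node_root_notin:
  "card {X \<in> inf_closed_sets (Node ts). [] \<notin> X} = (\<Sum>i<length ts. I (ts ! i))"
proof -
  have inj: "inj_on (image (Cons i)) A" for i :: nat and A :: "nat list set set"
    by (simp add: inj_on_def inj_image_eq_iff)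
  have "image (Cons i) ` inf_closed_sets (ts ! i) \<inter> image (Cons j) ` inf_closed_sets (ts ! j) = {}"
    if "i \<noteq> j" for i j
  proof -
    have "Cons i ` A \<noteq> Cons j ` B" if "a \<in> A" for a A B
    proof
      assume "Cons i ` A = Cons j ` B"
      then have "i # a \<in> Cons j ` B" using that by blast
      then show False using \<open>i \<noteq> j\<close> by blast
    qed
    then show ?thesis by (fastforce simp: inf_closed_sets_def)
  qed
  then show ?thesis
    by (simp add: inf_closed_sets_Node_root_notin card_UN_disjoint finite_inf_closed_sets
        card_image[OF inj] I_eq_card_inf_closed_sets)
qed

lemma bij_betw_inf_closed_sets_Node_root_in:
  "bij_betw (\<lambda>X. \<lambda>i\<in>{..<length ts}. {p. i # p \<in> X})
     {X \<in> inf_closed_sets (Node ts). [] \<in> X}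
     (\<Pi>\<^sub>E i\<in>{..<length ts}. insert {} (inf_closed_sets (ts ! i)))"
proof (rule bij_betw_byWitness[where f' = "\<lambda>Y. insert [] (\<Union>i<length ts. Cons i ` Y i)"];
    (intro ballI)?)
  fix X assume "X \<in> {X \<in> inf_closed_sets (Node ts). [] \<in> X}"
  then have sub: "X \<subseteq> positions (Node ts)" and root: "[] \<in> X"
    by (auto simp: inf_closed_sets_def)
  have "x \<in> (\<Union>i<length ts. Cons i ` {p. i # p \<in> X})" if "x \<in> X" "x \<noteq> []" for x
  proof -
    obtain i p where x: "x = i # p" using \<open>x \<noteq> []\<close> by (cases x) auto
    then have "i < length ts" using sub that(1) by (auto simp: positions_def)
    then show ?thesis using that(1) x by blast
  qed
  then show "insert [] (\<Union>i<length ts. Cons i ` (\<lambda>i\<in>{..<length ts}. {p. i # p \<in> X}) i) = X"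
    using root by auto
next
  fix Y assume "Y \<in> (\<Pi>\<^sub>E i\<in>{..<length ts}. insert {} (inf_closed_sets (ts ! i)))"
  then show "(\<lambda>i\<in>{..<length ts}. {p. i # p \<in> insert [] (\<Union>i<length ts. Cons i ` Y i)}) = Y"
    by (intro ext) (auto simp: PiE_def extensional_def)
next
  have slice: "{p. i # p \<in> X} \<in> insert {} (inf_closed_sets (ts ! i))"
    if "X \<in> inf_closed_sets (Node ts)" for X i
    using that infima_closed_slice by (auto simp: inf_closed_sets_def positions_def)
  show "(\<lambda>X. \<lambda>i\<in>{..<length ts}. {p. i # p \<in> X}) ` {X \<in> inf_closed_sets (Node ts). [] \<in> X}
      \<subseteq> (\<Pi>\<^sub>E i\<in>{..<length ts}. insert {} (inf_closed_sets (ts ! i)))"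
    using slice by (intro image_subsetI) (simp add: PiE_iff)
next
  show "(\<lambda>Y. insert [] (\<Union>i<length ts. Cons i ` Y i)) `
        (\<Pi>\<^sub>E i\<in>{..<length ts}. insert {} (inf_closed_sets (ts ! i)))
      \<subseteq> {X \<in> inf_closed_sets (Node ts). [] \<in> X}"
  proof (rule image_subsetI)
    fix Y assume "Y \<in> (\<Pi>\<^sub>E i\<in>{..<length ts}. insert {} (inf_closed_sets (ts ! i)))"
    then have sub: "Y i \<subseteq> positions (ts ! i)" and cl: "infima_closed (Y i)" if "i < length ts" for i
      using that by (auto simp: inf_closed_sets_def infima_closed_def)
    let ?X = "insert [] (\<Union>i<length ts. Cons i ` Y i)"
    have "vinf u v \<in> ?X" if u: "u \<in> ?X" and v: "v \<in> ?X" for u v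
    proof (cases "u = [] \<or> v = []")
      case False
      then obtain i p j q where "u = i # p" "v = j # q" "i < length ts" "p \<in> Y i" "q \<in> Y j"
        using u v by auto
      moreover have "vinf p q \<in> Y i" if "i = j"
        using cl[OF \<open>i < length ts\<close>] \<open>p \<in> Y i\<close> \<open>q \<in> Y j\<close> that
        unfolding infima_closed_def by blast
      ultimately show ?thesis by auto
    qed auto
    then have "infima_closed ?X" by (simp add: infima_closed_def)
    then show "?X \<in> {X \<in> inf_closed_sets (Node ts). [] \<in> X}"
      using sub by (auto simp: inf_closed_sets_def positions_def subset_iff)
  qed
qed

lemma card_inf_closed_sets_Node_root_in:
  "card {X \<in> inf_closed_sets (Node ts). [] \<in> X} = (\<Prod>i<length ts. Suc (I (ts ! i)))"
proof -
  have "{} \<notin> inf_closed_sets t" for t by (simp add: inf_closed_sets_def)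
  then show ?thesis
    using bij_betw_same_card[OF bij_betw_inf_closed_sets_Node_root_in]
    by (simp add: card_PiE finite_inf_closed_sets I_eq_card_inf_closed_sets)
qed

lemma I_Node: "I (Node ts) = (\<Sum>t\<leftarrow>ts. I t) + (\<Prod>t\<leftarrow>ts. Suc (I t))"
proof -
  let ?S = "inf_closed_sets (Node ts)"
  have "?S = {X \<in> ?S. [] \<notin> X} \<union> {X \<in> ?S. [] \<in> X}" by blast
  then have "I (Node ts) = card {X \<in> ?S. [] \<notin> X} + card {X \<in> ?S. [] \<in> X}"
    unfolding I_eq_card_inf_closed_sets
    by (metis (no_types, lifting) card_Un_disjoint disjoint_iff finite_Un finite_inf_closed_sets mem_Collect_eq)
  also have "\<dots> = (\<Sum>t\<leftarrow>ts. I t) + (\<Prod>t\<leftarrow>ts. Suc (I t))"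
    by (simp add: card_inf_closed_sets_Node_root_notin card_inf_closed_sets_Node_root_in
        sum.list_conv_set_nth prod.list_conv_set_nth atLeast0LessThan)
  finally show ?thesis .
qed

lemma I_Node_mset: "I (Node ts) = (\<Sum>t\<in>#mset ts. I t) + (\<Prod>t\<in>#mset ts. Suc (I t))"
  by (simp add: I_Node sum_mset_sum_list prod_mset_prod_list flip: mset_map)

lemma tsize_Node_mset: "tsize (Node ts) = Suc (\<Sum>t\<in>#mset ts. tsize t)"
  by (simp add: sum_mset_sum_list flip: mset_map)

lemma tsize_pos: "0 < tsize t"
  by (cases t) simp

lemma I_leaf [simp]: "I leaf = 1"
  by (simp add: I_Node)

lemma Suc_sum_mset_le_prod_mset_Suc:
  fixes f :: "'a \<Rightarrow> nat"
  shows "Suc (\<Sum>x\<in>#A. f x) \<le> (\<Prod>x\<in>#A. Suc (f x))"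
proof (induction A)
  case (add a A)
  have "Suc (f a + (\<Sum>x\<in>#A. f x)) \<le> Suc (f a) * Suc (\<Sum>x\<in>#A. f x)" by simp
  also have "\<dots> \<le> Suc (f a) * (\<Prod>x\<in>#A. Suc (f x))" using add.IH by (rule mult_le_mono2)
  finally show ?case by simp
qed simp

lemma prod_mset_Suc_pos: "0 < (\<Prod>x\<in>#A. Suc (f x))"
  by (induction A) simp_all

lemma I_pos: "0 < I t"
  by (cases t) (simp add: I_Node_mset prod_mset_Suc_pos)

lemma Suc_le_prod_mset_Suc:
  fixes f :: "'a \<Rightarrow> nat"
  assumes "a \<in># A"
  shows "Suc (f a) \<le> (\<Prod>x\<in>#A. Suc (f x))"
proof -
  obtain B where A: "A = add_mset a B" using assms by (blast dest: multi_member_split)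
  have "Suc (f a) * 1 \<le> Suc (f a) * (\<Prod>x\<in>#B. Suc (f x))"
    using prod_mset_Suc_pos[of f B] by (intro mult_le_mono2) simp
  then show ?thesis by (simp add: A)
qed

lemma prod_mset_mono_nat:
  fixes f g :: "'a \<Rightarrow> nat"
  shows "(\<And>x. x \<in># A \<Longrightarrow> f x \<le> g x) \<Longrightarrow> (\<Prod>x\<in>#A. f x) \<le> (\<Prod>x\<in>#A. g x)"
  by (induction A) (auto intro: mult_le_mono)

lemma power_sum_mset: "(\<Prod>x\<in>#A. (b::nat) ^ g x) = b ^ (\<Sum>x\<in>#A. g x)"
  by (induction A) (simp_all add: power_add)

lemma filter_neq_plus_replicate_mset:
  "M = filter_mset (\<lambda>y. y \<noteq> x) M + replicate_mset (count M x) x"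
  using multiset_partition[of M "\<lambda>y. y \<noteq> x"] filter_eq_replicate_mset[of x M] by simp

lemma Suc_I_le_pow: "Suc (I t) \<le> 2 ^ tsize t"
proof (induction t)
  case (Node ts)
  have "(\<Prod>t\<in>#mset ts. Suc (I t)) \<le> (\<Prod>t\<in>#mset ts. 2 ^ tsize t)"
    using Node.IH by (intro prod_mset_mono_nat) auto
  also have "\<dots> = 2 ^ (\<Sum>t\<in>#mset ts. tsize t)"
    by (simp add: power_sum_mset)
  finally show ?case
    using Suc_sum_mset_le_prod_mset_Suc[of I "mset ts"] unfolding I_Node_mset tsize_Node_mset by simp
qed

section \<open>Minimal trees\<close>

lemma minimal_iff: "minimal T \<longleftrightarrow> (\<forall>T'. tsize T' = tsize T \<longrightarrow> I T \<le> I T')"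
proof -
  let ?S = "{I T' | T'. tsize T' = tsize T}"
  have "?S \<subseteq> {..< 2 ^ tsize T}"
    using Suc_I_le_pow by (auto simp: Suc_le_eq) metis
  then have fin: "finite ?S" by (rule finite_subset) simp
  show ?thesis
  proof
    assume "minimal T"
    then show "\<forall>T'. tsize T' = tsize T \<longrightarrow> I T \<le> I T'"
      using Min_le[OF fin] by (auto simp: minimal_def m_def)
  next
    assume "\<forall>T'. tsize T' = tsize T \<longrightarrow> I T \<le> I T'"
    then have "Min ?S = I T" by (intro Min_eqI[OF fin]) auto
    then show "minimal T" by (simp add: minimal_def m_def)
  qed
qed

lemma minimal_le: "minimal T \<Longrightarrow> tsize T' = tsize T \<Longrightarrow> I T \<le> I T'"
  by (simp add: minimal_iff)

lemma minimal_exchange: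
  assumes "minimal (Node ts)" and "mset ts = A + R"
    and "(\<Sum>t\<in>#A'. tsize t) = (\<Sum>t\<in>#A. tsize t)"
  shows "(\<Sum>t\<in>#A. I t) + (\<Prod>t\<in>#A. Suc (I t)) * (\<Prod>t\<in>#R. Suc (I t))
    \<le> (\<Sum>t\<in>#A'. I t) + (\<Prod>t\<in>#A'. Suc (I t)) * (\<Prod>t\<in>#R. Suc (I t))"
proof -
  obtain ts' where ts': "mset ts' = A' + R" using ex_mset by blast
  have "tsize (Node ts') = tsize (Node ts)"
    unfolding tsize_Node_mset ts' assms(2) using assms(3) by simp
  with assms(1) have "I (Node ts) \<le> I (Node ts')" by (rule minimal_le)
  then show ?thesis unfolding I_Node_mset ts' assms(2) by (simp add: algebra_simps)
qed

lemma minimal_child: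
  assumes "minimal (Node ts)" and "t \<in> set ts"
  shows "minimal t"
  unfolding minimal_iff
proof (intro allI impI)
  fix t' assume "tsize t' = tsize t"
  moreover have "mset ts = {#t#} + (mset ts - {#t#})" using assms(2) by simp
  ultimately have exchange: "I t + Suc (I t) * P \<le> I t' + Suc (I t') * P"
    if "P = (\<Prod>u\<in>#mset ts - {#t#}. Suc (I u))" for P
    using minimal_exchange[OF assms(1), of "{#t#}" _ "{#t'#}"] that by simp
  show "I t \<le> I t'"
  proof (rule ccontr)
    assume "\<not> I t \<le> I t'"
    then have "Suc (I t') * P \<le> Suc (I t) * P" for P by (intro mult_le_mono1) simp
    with exchange \<open>\<not> I t \<le> I t'\<close> show False by (meson add_less_le_mono not_le)
  qed
qed

lemma minimal_branch_at: "minimal T \<Longrightarrow> is_pos T p \<Longrightarrow> minimal (branch_at T p)"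
proof (induction p arbitrary: T)
  case (Cons i p)
  then obtain ts where "T = Node ts" "i < length ts" "is_pos (ts ! i) p"
    by (metis is_pos.simps(2) rtree.exhaust)
  with Cons show ?case by (simp add: minimal_child)
qed simp

lemma quadratic_sum_le_prod_mset:
  fixes f g :: "'a \<Rightarrow> nat"
  assumes "\<And>x. x \<in># A \<Longrightarrow> f x * Suc (f x) \<le> 2 * g x"
  shows "(\<Sum>x\<in>#A. f x) * Suc (\<Sum>x\<in>#A. f x) + 2 \<le> 2 * (\<Prod>x\<in>#A. Suc (g x))"
  using assms
proof (induction A)
  case (add a A)
  define s n x P where "s = f a" and "n = (\<Sum>x\<in>#A. f x)" and "x = g a"
    and "P = (\<Prod>x\<in>#A. Suc (g x))"
  have hs: "s * Suc s \<le> 2 * x" and IH: "n * Suc n + 2 \<le> 2 * P"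
    using add by (simp_all add: s_def x_def n_def P_def)
  have "4 * (s * n) \<le> (s * Suc s) * (n * Suc n)"
  proof (cases "s = 0 \<or> n = 0")
    case False
    then have "2 * 2 \<le> Suc s * Suc n" by (intro mult_le_mono) auto
    then have "(s * n) * 4 \<le> (s * n) * (Suc s * Suc n)" by (intro mult_le_mono2) simp
    then show ?thesis by (simp add: algebra_simps)
  qed auto
  then have "2 * ((s + n) * Suc (s + n) + 2) \<le> (s * Suc s + 2) * (n * Suc n + 2)"
    by (simp add: algebra_simps)
  also have "\<dots> \<le> (2 * x + 2) * (2 * P)" using hs IH by (intro mult_le_mono) auto
  finally show ?case by (simp add: s_def n_def x_def P_def algebra_simps)
qed simp

lemma quadratic_le_I: "tsize T * Suc (tsize T) \<le> 2 * I T"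
proof (induction T)
  case (Node ts)
  define n where "n = (\<Sum>t\<in>#mset ts. tsize t)"
  have "n * Suc n + 2 \<le> 2 * (\<Prod>t\<in>#mset ts. Suc (I t))"
    unfolding n_def using Node.IH by (intro quadratic_sum_le_prod_mset) simp
  moreover have "tsize t \<le> I t" if "t \<in> set ts" for t
  proof -
    have "tsize t * 2 \<le> tsize t * Suc (tsize t)" by (cases "tsize t") auto
    then show ?thesis using Node.IH[OF that] by linarith
  qed
  then have "n \<le> (\<Sum>t\<in>#mset ts. I t)"
    unfolding n_def by (intro sum_mset_mono) simp
  ultimately show ?case
    unfolding I_Node_mset tsize_Node_mset n_def[symmetric] by (simp add: algebra_simps)
qed

lemma I_ge_21_if_tsize_ge_6: "6 \<le> tsize T \<Longrightarrow> 21 \<le> I T"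
  using quadratic_le_I[of T] mult_le_mono[of 6 "tsize T" 7 "Suc (tsize T)"] by linarith

section \<open>Lower bounds for small orders\<close>

text \<open>partitions_reach L t s p N k states that every partition of N into parts of size at most k,
  each part a adding L a to s and the factor Suc (L a) to p, ends with t \<le> s + p.\<close>

function partitions_reach :: "(nat \<Rightarrow> nat) \<Rightarrow> nat \<Rightarrow> nat \<Rightarrow> nat \<Rightarrow> nat \<Rightarrow> nat \<Rightarrow> bool" where
  "partitions_reach L t s p N k =
     (if t \<le> s + p then True
      else if k = 0 then 0 < N
      else partitions_reach L t s p N (k - 1) \<and>
        (if k \<le> N then partitions_reach L t (s + L k) (p * Suc (L k)) (N - k) k else True))"
  by pat_completeness auto
termination by (relation "measures [\<lambda>(_, _, _, _, N, _). N, \<lambda>(_, _, _, _, _, k). k]") auto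

declare partitions_reach.simps [simp del]

lemma partitions_reach_sound:
  assumes "partitions_reach L t s p N k" and "\<Sum>\<^sub># A = N" and "\<forall>x\<in>#A. 0 < x \<and> x \<le> k"
  shows "t \<le> s + (\<Sum>x\<in>#A. L x) + p * (\<Prod>x\<in>#A. Suc (L x))"
  using assms
proof (induction L t s p N k arbitrary: A rule: partitions_reach.induct)
  case (1 L t s p N k)
  note check = "1.prems"(1)[unfolded partitions_reach.simps[of L t s p N k]]
  show ?case
  proof (cases "t \<le> s + p")
    case True
    have "p \<le> p * (\<Prod>x\<in>#A. Suc (L x))"
      using prod_mset_Suc_pos[of L A] by simp
    with True show ?thesis by linarith
  next
    case not_reached: False
    have "k \<noteq> 0"
    proof
      assume "k = 0"
      then have "A = {#}" using "1.prems"(3) by (cases A) auto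
      then show False using "1.prems"(2) check not_reached \<open>k = 0\<close> by simp
    qed
    show ?thesis
    proof (cases "k \<in># A")
      case True
      then obtain A' where A: "A = add_mset k A'" by (blast dest: multi_member_split)
      then have "k \<le> N" using "1.prems"(2) by auto
      then have "partitions_reach L t (s + L k) (p * Suc (L k)) (N - k) k"
        using check not_reached \<open>k \<noteq> 0\<close> by simp
      from "1.IH"(2)[OF not_reached \<open>k \<noteq> 0\<close> \<open>k \<le> N\<close> this] "1.prems"(2,3) A
      show ?thesis by (simp add: algebra_simps)
    next
      case False
      have "0 < x \<and> x \<le> k - 1" if "x \<in># A" for x
      proof -
        have "x \<noteq> k" using that False by blast
        moreover have "0 < x" "x \<le> k" using that "1.prems"(3) by auto
        ultimately show ?thesis by linarith
      qed
      moreover have "partitions_reach L t s p N (k - 1)"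
        using check not_reached \<open>k \<noteq> 0\<close> by simp
      ultimately show ?thesis using "1.IH"(1)[OF not_reached \<open>k \<noteq> 0\<close>] "1.prems"(2) by auto
    qed
  qed
qed

lemma I_lower_bound_by_partitions:
  assumes "L 1 \<le> 1"
    and "\<And>n. 2 \<le> n \<Longrightarrow> n \<le> K \<Longrightarrow> partitions_reach L (L n) 0 1 (n - 1) (n - 1)"
  shows "tsize T \<le> K \<Longrightarrow> L (tsize T) \<le> I T"
proof (induction T)
  case (Node ts)
  show ?case
  proof (cases ts)
    case Nil
    then show ?thesis using assms(1) by simp
  next
    case (Cons t ts')
    define A where "A = image_mset tsize (mset ts)"
    have N: "tsize (Node ts) = Suc (\<Sum>\<^sub># A)" unfolding A_def by (rule tsize_Node_mset)
    have A_pos: "\<forall>x\<in>#A. 0 < x \<and> x \<le> \<Sum>\<^sub># A"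
      using tsize_pos by (auto simp: A_def sum_mset.remove)
    have "1 \<le> \<Sum>\<^sub># A" using tsize_pos[of t] Cons by (simp add: A_def)
    then have "partitions_reach L (L (tsize (Node ts))) 0 1 (\<Sum>\<^sub># A) (\<Sum>\<^sub># A)"
      using assms(2)[of "Suc (\<Sum>\<^sub># A)"] Node.prems unfolding N by simp
    from partitions_reach_sound[OF this refl A_pos]
    have "L (tsize (Node ts)) \<le> (\<Sum>t\<in>#mset ts. L (tsize t)) + (\<Prod>t\<in>#mset ts. Suc (L (tsize t)))"
      by (simp add: A_def image_mset.compositionality comp_def)
    also have "\<dots> \<le> I (Node ts)"
    proof -
      have "L (tsize u) \<le> I u" if "u \<in> set ts" for u
        using Node.IH[OF that] Node.prems member_le_sum_list[of "tsize u" "map tsize ts"] that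
        by simp
      then show ?thesis
        unfolding I_Node_mset by (intro add_mono sum_mset_mono prod_mset_mono_nat) auto
    qed
    finally show ?thesis .
  qed
qed

definition m_table :: "nat \<Rightarrow> nat" where
  "m_table n = [0, 1, 3, 6, 11, 20, 36, 61, 101, 166, 283, 481] ! n"

lemma m_table_le_I: "tsize T \<le> 11 \<Longrightarrow> m_table (tsize T) \<le> I T"
proof (rule I_lower_bound_by_partitions)
  have "\<forall>n\<in>set [2..<12]. partitions_reach m_table (m_table n) 0 1 (n - 1) (n - 1)"
    by (simp add: m_table_def partitions_reach.simps upt_rec)
  moreover have "n \<in> set [2..<12]" if "2 \<le> n" "n \<le> 11" for n
    using that unfolding set_upt by simp
  ultimately show "partitions_reach m_table (m_table n) 0 1 (n - 1) (n - 1)"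
    if "2 \<le> n" "n \<le> 11" for n
    using that by blast
qed (simp add: m_table_def)

section \<open>Children of minimal trees\<close>

definition star :: "nat \<Rightarrow> rtree" where
  "star k = Node (replicate k leaf)"

lemma tsize_star [simp]: "tsize (star k) = Suc k"
  by (simp add: star_def sum_list_replicate)

lemma I_star [simp]: "I (star k) = k + 2 ^ k"
  by (simp add: star_def I_Node sum_list_replicate flip: numeral_2_eq_2)

lemma minimal_leaf_children_le_4:
  assumes "minimal (Node ts)"
  shows "count (mset ts) leaf \<le> 4"
proof (rule ccontr)
  assume "\<not> count (mset ts) leaf \<le> 4"
  then have "replicate_mset 5 leaf \<subseteq># mset ts"
    by (simp flip: count_le_replicate_mset_subset_eq)
  then have "mset ts = replicate_mset 5 leaf + (mset ts - replicate_mset 5 leaf)" by simp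
  from minimal_exchange[OF assms this, of "{#star 3, leaf#}"]
  have "5 + 32 * P \<le> 12 + 24 * P" if "P = (\<Prod>t\<in>#mset ts - replicate_mset 5 leaf. Suc (I t))" for P
    using that by (simp add: numeral_eq_Suc)
  moreover have "0 < (\<Prod>t\<in>#mset ts - replicate_mset 5 leaf. Suc (I t))"
    by (rule prod_mset_Suc_pos)
  ultimately show False by fastforce
qed

text \<open>Moving the child D of a minimal tree below its sibling Node L cannot decrease I.\<close>

lemma minimal_regraft:
  assumes "minimal (Node ts)" and "mset ts = {#D, Node L#} + R"
  shows "(\<Sum>t\<in>#mset L. I t) * (\<Prod>t\<in>#R. Suc (I t)) \<le> (\<Prod>t\<in>#mset L. Suc (I t))"
proof -
  define d s p Q where "d = I D" and "s = (\<Sum>t\<in>#mset L. I t)"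
    and "p = (\<Prod>t\<in>#mset L. Suc (I t))" and "Q = (\<Prod>t\<in>#R. Suc (I t))"
  have "tsize (Node (D # L)) = tsize D + tsize (Node L)" by simp
  then have "d + (s + p) + Suc d * Suc (s + p) * Q \<le> (d + s + Suc d * p) + Suc (d + s + Suc d * p) * Q"
    using minimal_exchange[OF assms, of "{#Node (D # L)#}"]
    by (simp add: d_def s_def p_def Q_def I_Node_mset mult.assoc)
  moreover have "d + (s + p) + Suc d * Suc (s + p) * Q + d * p
      = (d + s + Suc d * p) + Suc (d + s + Suc d * p) * Q + d * (s * Q)"
    by (simp add: algebra_simps)
  ultimately have "d * (s * Q) \<le> d * p" by linarith
  moreover have "0 < d" using I_pos by (simp add: d_def)
  ultimately show ?thesis by (simp add: s_def p_def Q_def)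
qed

lemma minimal_nonleaf_children_less:
  assumes "minimal (Node ts)" and "mset ts = {#D, x, y#} + R" and "x \<noteq> leaf"
  shows "I y < I x"
proof -
  obtain l L' where x: "x = Node (l # L')" using assms(3) by (metis rtree.exhaust neq_Nil_conv)
  define L where "L = l # L'"
  have "1 \<le> (\<Sum>t\<in>#mset L. I t)" using I_pos[of l] by (simp add: L_def)
  have "mset ts = {#D, Node L#} + add_mset y R" using assms(2) x by (simp add: L_def)
  note regraft = minimal_regraft[OF assms(1) this]
  have "Suc (I y) \<le> (\<Prod>t\<in>#add_mset y R. Suc (I t))" by (rule Suc_le_prod_mset_Suc) simp
  also have "\<dots> \<le> (\<Sum>t\<in>#mset L. I t) * (\<Prod>t\<in>#add_mset y R. Suc (I t))"
    using \<open>1 \<le> (\<Sum>t\<in>#mset L. I t)\<close> by simp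
  also have "\<dots> \<le> (\<Prod>t\<in>#mset L. Suc (I t))" by (rule regraft)
  also have "\<dots> \<le> I x" by (simp add: x L_def[symmetric] I_Node_mset)
  finally show ?thesis by simp
qed

lemma minimal_two_nonleaf_children:
  assumes "minimal (Node ts)" and "2 \<le> size (filter_mset (\<lambda>t. t \<noteq> leaf) (mset ts))"
  shows "length ts = 2"
proof (rule ccontr)
  assume "length ts \<noteq> 2"
  let ?NL = "filter_mset (\<lambda>t. t \<noteq> leaf) (mset ts)"
  obtain x M where M: "?NL = add_mset x M" using assms(2) by (cases ?NL) auto
  then obtain y N where "M = add_mset y N" using assms(2) by (cases M) auto
  with M have NL: "?NL = {#x, y#} + N" by simp
  then have "x \<in># ?NL" "y \<in># ?NL" by simp_all
  then have "x \<noteq> leaf" "y \<noteq> leaf" by simp_all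
  have "{#x, y#} \<subseteq># ?NL" using NL by simp
  also have "?NL \<subseteq># mset ts" by (rule multiset_filter_subset)
  finally obtain R0 where R0: "mset ts = {#x, y#} + R0" by (auto simp: mset_subset_eq_exists_conv)
  have "size ?NL \<le> length ts" using size_filter_mset_lesseq[of _ "mset ts"] by simp
  moreover have "length ts = 2 + size R0" using R0 by (metis size_mset size_union size_add_mset
        size_empty numeral_2_eq_2 add_Suc_shift add_0)
  ultimately have "size R0 \<noteq> 0" using assms(2) \<open>length ts \<noteq> 2\<close> by linarith
  then obtain D R where "R0 = add_mset D R" by (cases R0) auto
  then have "mset ts = {#D, x, y#} + R" "mset ts = {#D, y, x#} + R" using R0 by simp_all
  then have "I y < I x" "I x < I y"
    using minimal_nonleaf_children_less[OF assms(1)] \<open>x \<noteq> leaf\<close> \<open>y \<noteq> leaf\<close> by blast+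
  then show False by simp
qed

lemma minimal_swap_grandchild:
  assumes "minimal (Node ts)" and "mset ts = {#B, Node L#}" and "D \<in> set L"
  shows "I D \<le> I B"
proof (rule ccontr)
  assume "\<not> I D \<le> I B"
  define L' where "L' = remove1 D L"
  have L: "mset L = add_mset D (mset L')" using assms(3) by (simp add: L'_def)
  define b d s p where "b = I B" and "d = I D" and "s = (\<Sum>t\<in>#mset L'. I t)"
    and "p = (\<Prod>t\<in>#mset L'. Suc (I t))"
  have "b < d" using \<open>\<not> I D \<le> I B\<close> by (simp add: b_def d_def)
  then obtain x where x: "d = b + Suc x" using less_imp_Suc_add by auto
  have "Suc s \<le> p" unfolding s_def p_def by (rule Suc_sum_mset_le_prod_mset_Suc)
  then obtain y where "p = Suc s + y" using le_Suc_ex by metis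
  then have y: "p = s + Suc y" by simp
  have ts: "mset ts = {#B, Node L#} + {#}" using assms(2) by simp
  have sz: "(\<Sum>t\<in>#{#D, Node (B # L')#}. tsize t) = (\<Sum>t\<in>#{#B, Node L#}. tsize t)"
    using sum_list_map_remove1[OF assms(3), of tsize] by (simp add: L'_def)
  from minimal_exchange[OF assms(1) ts sz]
  have "b + (d + s + Suc d * p) + Suc b * Suc (d + s + Suc d * p)
      \<le> d + (b + s + Suc b * p) + Suc d * Suc (b + s + Suc b * p)"
    by (simp add: I_Node_mset L b_def d_def s_def p_def)
  \<comment> \<open>the exchange changes I by (d - b) * (p - s), and p > s\<close>
  moreover have "b + (d + s + Suc d * p) + Suc b * Suc (d + s + Suc d * p) + d * s + b * p
      = d + (b + s + Suc b * p) + Suc d * Suc (b + s + Suc b * p) + d * p + b * s"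
    by (simp add: algebra_simps)
  moreover have "d * s + b * p < d * p + b * s" unfolding x y by (simp add: algebra_simps)
  ultimately show False by linarith
qed

lemma minimal_tsize_le:
  assumes "minimal (Node ts)" and "\<forall>t\<in>set ts. tsize t \<le> c"
  shows "tsize (Node ts) \<le> Suc (max (2 * c) (c + 4))"
proof (cases "2 \<le> size (filter_mset (\<lambda>t. t \<noteq> leaf) (mset ts))")
  case True
  then have "length ts = 2" by (rule minimal_two_nonleaf_children[OF assms(1)])
  then obtain a b where "ts = [a, b]" by (metis length_0_conv length_Suc_conv numeral_2_eq_2)
  then show ?thesis using assms(2) by (simp add: max_def)
next
  case False
  let ?NL = "filter_mset (\<lambda>t. t \<noteq> leaf) (mset ts)"
  have "(\<Sum>t\<in>#mset ts. tsize t)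
      = (\<Sum>t\<in>#?NL + replicate_mset (count (mset ts) leaf) leaf. tsize t)"
    by (rule arg_cong[OF filter_neq_plus_replicate_mset])
  also have "\<dots> = (\<Sum>t\<in>#?NL. tsize t) + count (mset ts) leaf" by simp
  moreover have "(\<Sum>t\<in>#?NL. tsize t) \<le> (\<Sum>t\<in>#?NL. c)"
    using assms(2) by (intro sum_mset_mono) auto
  moreover have "(\<Sum>t\<in>#?NL. c) \<le> c"
    using False mult_le_mono1[of "size ?NL" 1 c] by simp
  moreover have "count (mset ts) leaf \<le> 4" using assms(1) by (rule minimal_leaf_children_le_4)
  ultimately show ?thesis unfolding tsize_Node_mset by linarith
qed

section \<open>Parents of branches of order 5\<close>

lemma I_eq_20_if_minimal_tsize_5:
  assumes "minimal B" and "tsize B = 5"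
  shows "I B = 20"
  using m_table_le_I[of B] minimal_le[OF assms(1), of "star 4"] assms(2) by (simp add: m_table_def)

lemma tsize_minimal_Node_5_with_nonleaf_sibling:
  assumes "minimal (Node ts)" and ts: "mset ts = {#B, Node L#}" and "L \<noteq> []"
    and "tsize B = 5"
  shows "tsize (Node ts) \<in> {10, 11, 15, 16}"
proof -
  have "set ts = {B, Node L}" using arg_cong[OF ts, of set_mset] by simp
  then have "minimal B" and min_L: "minimal (Node L)" using minimal_child[OF assms(1)] by auto
  have b: "I B = 20" using \<open>minimal B\<close> assms(4) by (rule I_eq_20_if_minimal_tsize_5)
  have "tsize D \<le> 5" if "D \<in> set L" for D
    using minimal_swap_grandchild[OF assms(1) ts that] I_ge_21_if_tsize_ge_6[of D] b by linarith
  then have k_le: "tsize (Node L) \<le> 11" using minimal_tsize_le[OF min_L, of 5] by simp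
  define k where "k = tsize (Node L)"
  have "2 \<le> k" using \<open>L \<noteq> []\<close> tsize_pos by (cases L) (auto simp: k_def Suc_le_eq intro: trans_less_add1)
  have size: "tsize (Node ts) = 6 + k" unfolding tsize_Node_mset ts by (simp add: assms(4) k_def)
  have "41 + 22 * m_table k \<le> I (Node ts)"
    using m_table_le_I[OF k_le] by (simp add: I_Node_mset ts b k_def)
  then have lower: "41 + 22 * m_table k \<le> I W" if "tsize W = 6 + k" for W
    using minimal_le[OF assms(1), of W] that size by simp
  \<comment> \<open>each excluded k is refuted by a tree of order 6 + k with smaller I\<close>
  have "k \<noteq> 2" using lower[of "Node [star 3, star 2]"] by (auto simp: I_Node m_table_def)
  moreover have "k \<noteq> 3" using lower[of "Node [star 3, star 3]"] by (auto simp: I_Node m_table_def)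
  moreover have "k \<noteq> 6" using lower[of "Node [Node [star 3, leaf, leaf], star 3]"]
    by (auto simp: I_Node m_table_def)
  moreover have "k \<noteq> 7" using lower[of "Node [Node [star 3, star 2], star 3]"]
    by (auto simp: I_Node m_table_def)
  moreover have "k \<noteq> 8" using lower[of "Node [Node [star 3, star 3], star 3]"]
    by (auto simp: I_Node m_table_def)
  moreover have "k \<noteq> 11" using lower[of "Node [Node [star 3, star 3], Node [star 3, leaf, leaf]]"]
    by (auto simp: I_Node m_table_def)
  ultimately have "k = 4 \<or> k = 5 \<or> k = 9 \<or> k = 10"
    using \<open>2 \<le> k\<close> k_le unfolding k_def[symmetric] by presburger
  then show ?thesis using size by auto
qed

lemma not_minimal_5_branch_with_leaf_siblings:
  assumes "minimal (Node ts)" and ts: "mset ts = add_mset B (replicate_mset k leaf)"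
    and "tsize B = 5"
  shows False
proof -
  have "B \<in> set ts" using arg_cong[OF ts, of set_mset] by simp
  then have b: "I B = 20" using minimal_child[OF assms(1)] assms(3) I_eq_20_if_minimal_tsize_5 by blast
  have "count (mset ts) leaf = k" using assms(3) by (auto simp: ts)
  then have "k \<le> 4" using minimal_leaf_children_le_4[OF assms(1)] by simp
  have size: "tsize (Node ts) = 6 + k" unfolding tsize_Node_mset ts by (simp add: assms(3))
  have "I (Node ts) = 20 + k + 21 * 2 ^ k" by (simp add: I_Node_mset ts b flip: numeral_2_eq_2)
  then have lower: "20 + k + 21 * 2 ^ k \<le> I W" if "tsize W = 6 + k" for W
    using minimal_le[OF assms(1), of W] that size by simp
  have "k \<noteq> 0" using lower[of "Node [star 3, leaf]"] by (auto simp: I_Node)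
  moreover have "k \<noteq> 1" using lower[of "Node [star 3, leaf, leaf]"] by (auto simp: I_Node)
  moreover have "k \<noteq> 2" using lower[of "Node [star 3, star 2]"] by (auto simp: I_Node)
  moreover have "k \<noteq> 3" using lower[of "Node [star 3, star 3]"] by (auto simp: I_Node)
  moreover have "k \<noteq> 4" using lower[of "Node [star 4, star 3]"] by (auto simp: I_Node)
  ultimately show False using \<open>k \<le> 4\<close> by linarith
qed

lemma tsize_parent_of_minimal_5_branch:
  assumes "minimal (Node ts)" and "B \<in> set ts" and "tsize B = 5"
  shows "tsize (Node ts) \<in> {10, 11, 15, 16}"
proof -
  let ?NL = "filter_mset (\<lambda>t. t \<noteq> leaf) (mset ts)"
  have "B \<in># ?NL" using assms(2,3) by auto
  show ?thesis
  proof (cases "2 \<le> size ?NL")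
    case True
    then have "length ts = 2" by (rule minimal_two_nonleaf_children[OF assms(1)])
    then obtain x y where "ts = [x, y]" by (metis length_0_conv length_Suc_conv numeral_2_eq_2)
    then obtain C where ts: "mset ts = {#B, C#}" using assms(2) by (auto simp: add_mset_commute)
    have "C \<noteq> leaf" using True \<open>B \<in># ?NL\<close> by (auto simp: ts split: if_splits)
    then obtain l L where "C = Node (l # L)" by (metis rtree.exhaust neq_Nil_conv)
    then have "mset ts = {#B, Node (l # L)#}" using ts by simp
    then show ?thesis using tsize_minimal_Node_5_with_nonleaf_sibling[OF assms(1) _ _ assms(3)] by blast
  next
    case False
    obtain N where "?NL = add_mset B N" using \<open>B \<in># ?NL\<close> by (blast dest: multi_member_split)
    moreover have "N = {#}" using False calculation by (cases N) auto
    ultimately have "?NL = {#B#}" by simp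
    then have "mset ts = add_mset B (replicate_mset (count (mset ts) leaf) leaf)"
      using filter_neq_plus_replicate_mset[of "mset ts" leaf] by simp
    then show ?thesis using not_minimal_5_branch_with_leaf_siblings[OF assms(1) _ assms(3)] by blast
  qed
qed

theorem lemma3p9:
  assumes "minimal T" and "tsize T \<ge> 6"
    and "v \<in> positions T" and "tsize (branch_at T v) = 5"
  shows "\<exists>w \<in> positions T. prefix w v \<and> tsize (branch_at T w) \<in> {10, 11, 15, 16}"
proof -
  have "v \<noteq> []" using assms(2,4) by auto
  then obtain w i where v: "v = w @ [i]" by (metis append_butlast_last_id)
  have "is_pos T (w @ [i])" using assms(3) v by (simp add: positions_def)
  then obtain ts where w: "is_pos T w" "branch_at T w = Node ts"
    and i: "i < length ts" "branch_at T v = ts ! i"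
    unfolding v by (blast dest: is_pos_snoc)
  have "minimal (Node ts)" using minimal_branch_at[OF assms(1) w(1)] w(2) by simp
  moreover have "ts ! i \<in> set ts" using i(1) by simp
  moreover have "tsize (ts ! i) = 5" using assms(4) i(2) by simp
  ultimately have "tsize (Node ts) \<in> {10, 11, 15, 16}" by (rule tsize_parent_of_minimal_5_branch)
  then show ?thesis using w v by (auto simp: positions_def)
qed

end
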